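(* Let $\mathcal{P}$ be a declassification policy with public view $\Delta^{\mathcal{P}}_P,\Gamma^{\mathcal{P}}_P$ and environment $\rho_{\mathcal{P}}$ as in the context. If $\langle\gamma_1,\gamma_2\rangle\in I[\mathcal{P}]$, then $\langle\gamma_1,\gamma_2\rangle\in\mathcal{V}[\Gamma^{\mathcal{P}}_P]_{\rho_{\mathcal{P}}}$.
   Context: Language: simply typed call-by-value lambda calculus with types $\tau::=\mathbf{int}\mid\alpha\mid\tau_1\times\tau_2\mid\tau_1\to\tau_2$, values $v::=n\mid\langle v,v\rangle\mid\lambda x:\tau.e$, terms $e::=x\mid v\mid\langle e,e\rangle\mid\pi_ie\mid e_1e_2$ (plus terminating primitive arithmetic operators on $\mathbf{int}$), standard typing and call-by-value reduction $\to^*$. Logical relation for type substitutions $\delta_1,\delta_2$ and $\rho\in\mathrm{Rel}(\delta_1,\delta_2)$ ($\mathrm{dom}\rho=\mathrm{dom}\delta_i$, $\rho(\alpha)$ a relation between closed values of types $\delta_1(\alpha)$, $\delta_2(\alpha)$): $\langle n,n\rangle\in\mathcal{V}[\mathbf{int}]_\rho$; pairs componentwise; $\langle v_1,v_2\rangle\in\mathcal{V}[\tau_1\to\tau_2]_\rho$ iff for all $\langle v_1',v_2'\rangle\in\mathcal{V}[\tau_1]_\rho$, $\langle v_1v_1',v_2v_2'\rangle\in\mathcal{E}[\tau_2]_\rho$; $\mathcal{V}[\alpha]_\rho=\rho(\alpha)$; $\langle e_1,e_2\rangle\in\mathcal{E}[\tau]_\rho$ iff $\vdash e_i:\delta_i(\tau)$,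 $e_i\to^*v_i$, $\langle v_1,v_2\rangle\in\mathcal{V}[\tau]_\rho$. A term substitution $\gamma$ respects $\Gamma$ if $\mathrm{dom}\gamma=\mathrm{dom}\Gamma$ and $\vdash\gamma(x):\Gamma(x)$. $\langle\gamma_1,\gamma_2\rangle\in\mathcal{V}[\Gamma]_\rho$ iff $\gamma_1$ respects $\delta_1(\Gamma)$, $\gamma_2$ respects $\delta_2(\Gamma)$, and $\langle\gamma_1(x),\gamma_2(x)\rangle\in\mathcal{V}[\Gamma(x)]_\rho$ for all $x\in\mathrm{dom}\Gamma$ (here $\delta(\Gamma)$ applies $\delta$ to every type in $\Gamma$). Policy $\mathcal{P}=\langle V_{\mathcal{P}},F_{\mathcal{P}}\rangle$: finite set $V_{\mathcal{P}}$ of confidential inputs, partial map $F_{\mathcal{P}}$ to closed declassification functions $f=\lambda x:\mathbf{int}.e$ of type $\mathbf{int}\to\tau_f$ ($\tau_f$ closed); $V_\top=V_{\mathcal{P}}\setminus\mathrm{dom}F_{\mathcal{P}}$. Public view: $\Delta^{\mathcal{P}}_P=\{\alpha_x\mid x\in V_\top\}\cup\{\alpha_f\mid F_{\mathcal{P}}(x)=f\}$, $\Gamma^{\mathcal{P}}_P=\{x:\alpha_x\mid x\in V_\top\}\cup\{x:\alpha_f,\,x_f:\alpha_f\to\tau_f\mid F_{\mathcal{P}}(x)=f\}$ (fresh distinct variables). $\delta_{\mathcal{P}}$ maps all type variables of $\Delta^{\mathcal{P}}_P$ to $\mathbf{int}$. Indistinguishability for $\Delta^{\mathcal{P}}_P\vdash\tau$: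 $\langle n,n\rangle\in I[\mathbf{int}]$; pairs componentwise; $\langle v_1,v_2\rangle\in I[\tau_1\to\tau_2]$ iff for all $\langle v_1',v_2'\rangle\in I[\tau_1]$, $\langle v_1v_1',v_2v_2'\rangle\in I[\tau_2]^{ev}$; $\langle v_1,v_2\rangle\in I[\alpha_x]$ iff $\vdash v_1,v_2:\mathbf{int}$; $\langle v_1,v_2\rangle\in I[\alpha_f]$ iff $\vdash v_1,v_2:\mathbf{int}$ and $\langle f v_1,f v_2\rangle\in I[\tau_f]^{ev}$; $\langle e_1,e_2\rangle\in I[\tau]^{ev}$ iff $\vdash e_1,e_2:\delta_{\mathcal{P}}(\tau)$, $e_i\to^*v_i$, $\langle v_1,v_2\rangle\in I[\tau]$. $\rho_{\mathcal{P}}(\alpha_x)=I[\alpha_x]$, $\rho_{\mathcal{P}}(\alpha_f)=I[\alpha_f]$ (taken with $\delta_1=\delta_2=\delta_{\mathcal{P}}$). $\langle\gamma_1,\gamma_2\rangle\in I[\mathcal{P}]$ iff both $\gamma_i$ respect $\delta_{\mathcal{P}}(\Gamma^{\mathcal{P}}_P)$, $\gamma_1(x_f)=\gamma_2(x_f)=f$ for each $x_f\in\mathrm{dom}\Gamma^{\mathcal{P}}_P$, and $\langle\gamma_1(x),\gamma_2(x)\rangle\in I[\Gamma^{\mathcal{P}}_P(x)]$ for every other $x\in\mathrm{dom}\Gamma^{\mathcal{P}}_P$. *)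

theory Defs
  imports Main
begin

type_synonym var = nat
type_synonym tvar = nat

datatype ty = TInt | TVar tvar | TProd ty ty | TArr ty ty

fun ftv :: "ty \<Rightarrow> tvar set" where
  "ftv TInt = {}"
| "ftv (TVar a) = {a}"
| "ftv (TProd t1 t2) = ftv t1 \<union> ftv t2"
| "ftv (TArr t1 t2) = ftv t1 \<union> ftv t2"

fun tsubst :: "(tvar \<Rightarrow> ty) \<Rightarrow> ty \<Rightarrow> ty" where
  "tsubst d TInt = TInt"
| "tsubst d (TVar a) = d a"
| "tsubst d (TProd t1 t2) = TProd (tsubst d t1) (tsubst d t2)"
| "tsubst d (TArr t1 t2) = TArr (tsubst d t1) (tsubst d t2)"

text \<open>Terms; Prim models a (terminating, total) binary primitive arithmetic operator on int.\<close>
datatype tm = Var var | Num int | Pair tm tm | Fst tm | Snd tm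
  | Lam var ty tm | App tm tm | Prim "int \<Rightarrow> int \<Rightarrow> int" tm tm

inductive is_val :: "tm \<Rightarrow> bool" where
  "is_val (Num n)"
| "is_val v1 \<Longrightarrow> is_val v2 \<Longrightarrow> is_val (Pair v1 v2)"
| "is_val (Lam x t e)"

text \<open>Substitution (used only with closed values, so no capture can occur).\<close>
fun subst :: "var \<Rightarrow> tm \<Rightarrow> tm \<Rightarrow> tm" where
  "subst x v (Var y) = (if y = x then v else Var y)"
| "subst x v (Num n) = Num n"
| "subst x v (Pair e1 e2) = Pair (subst x v e1) (subst x v e2)"
| "subst x v (Fst e) = Fst (subst x v e)"
| "subst x v (Snd e) = Snd (subst x v e)"
| "subst x v (Lam y t e) = (if y = x then Lam y t e else Lam y t (subst x v e))"
| "subst x v (App e1 e2) = App (subst x v e1) (subst x v e2)"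
| "subst x v (Prim f e1 e2) = Prim f (subst x v e1) (subst x v e2)"

inductive step :: "tm \<Rightarrow> tm \<Rightarrow> bool" where
  beta: "is_val v \<Longrightarrow> step (App (Lam x t e) v) (subst x v e)"
| fst: "is_val v1 \<Longrightarrow> is_val v2 \<Longrightarrow> step (Fst (Pair v1 v2)) v1"
| snd: "is_val v1 \<Longrightarrow> is_val v2 \<Longrightarrow> step (Snd (Pair v1 v2)) v2"
| prim: "step (Prim f (Num a) (Num b)) (Num (f a b))"
| app1: "step e1 e1' \<Longrightarrow> step (App e1 e2) (App e1' e2)"
| app2: "is_val v \<Longrightarrow> step e2 e2' \<Longrightarrow> step (App v e2) (App v e2')"
| pair1: "step e1 e1' \<Longrightarrow> step (Pair e1 e2) (Pair e1' e2)"
| pair2: "is_val v \<Longrightarrow> step e2 e2' \<Longrightarrow> step (Pair v e2) (Pair v e2')"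
| fstc: "step e e' \<Longrightarrow> step (Fst e) (Fst e')"
| sndc: "step e e' \<Longrightarrow> step (Snd e) (Snd e')"
| prim1: "step e1 e1' \<Longrightarrow> step (Prim f e1 e2) (Prim f e1' e2)"
| prim2: "is_val v \<Longrightarrow> step e2 e2' \<Longrightarrow> step (Prim f v e2) (Prim f v e2')"

definition eval :: "tm \<Rightarrow> tm \<Rightarrow> bool" where
  "eval e v \<longleftrightarrow> step\<^sup>*\<^sup>* e v \<and> is_val v"

inductive typing :: "tvar set \<Rightarrow> (var \<Rightarrow> ty option) \<Rightarrow> tm \<Rightarrow> ty \<Rightarrow> bool" where
  t_var: "G x = Some t \<Longrightarrow> typing D G (Var x) t"
| t_num: "typing D G (Num n) TInt"
| t_pair: "typing D G e1 t1 \<Longrightarrow> typing D G e2 t2 \<Longrightarrow> typing D G (Pair e1 e2) (TProd t1 t2)"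
| t_fst: "typing D G e (TProd t1 t2) \<Longrightarrow> typing D G (Fst e) t1"
| t_snd: "typing D G e (TProd t1 t2) \<Longrightarrow> typing D G (Snd e) t2"
| t_lam: "ftv t1 \<subseteq> D \<Longrightarrow> typing D (G(x \<mapsto> t1)) e t2 \<Longrightarrow> typing D G (Lam x t1 e) (TArr t1 t2)"
| t_app: "typing D G e1 (TArr t1 t2) \<Longrightarrow> typing D G e2 t1 \<Longrightarrow> typing D G (App e1 e2) t2"
| t_prim: "typing D G e1 TInt \<Longrightarrow> typing D G e2 TInt \<Longrightarrow> typing D G (Prim f e1 e2) TInt"

abbreviation ctyped :: "tm \<Rightarrow> ty \<Rightarrow> bool" where
  "ctyped e t \<equiv> typing {} Map.empty e t"

definition Erel :: "(tm \<times> tm) set \<Rightarrow> ty \<Rightarrow> ty \<Rightarrow> (tm \<times> tm) set" where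
  "Erel R T1 T2 = {(e1, e2). ctyped e1 T1 \<and> ctyped e2 T2 \<and>
      (\<exists>v1 v2. eval e1 v1 \<and> eval e2 v2 \<and> (v1, v2) \<in> R)}"

fun Vrel :: "(tvar \<Rightarrow> (tm \<times> tm) set) \<Rightarrow> (tvar \<Rightarrow> ty) \<Rightarrow> (tvar \<Rightarrow> ty) \<Rightarrow> ty \<Rightarrow> (tm \<times> tm) set" where
  "Vrel \<rho> d1 d2 TInt = {(Num n, Num n) | n. True}"
| "Vrel \<rho> d1 d2 (TVar a) = \<rho> a"
| "Vrel \<rho> d1 d2 (TProd t1 t2) = {(Pair a1 b1, Pair a2 b2) | a1 b1 a2 b2.
      (a1, a2) \<in> Vrel \<rho> d1 d2 t1 \<and> (b1, b2) \<in> Vrel \<rho> d1 d2 t2}"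
| "Vrel \<rho> d1 d2 (TArr t1 t2) = {(v1, v2). is_val v1 \<and> is_val v2 \<and>
      ctyped v1 (tsubst d1 (TArr t1 t2)) \<and> ctyped v2 (tsubst d2 (TArr t1 t2)) \<and>
      (\<forall>w1 w2. (w1, w2) \<in> Vrel \<rho> d1 d2 t1 \<longrightarrow>
         (App v1 w1, App v2 w2) \<in> Erel (Vrel \<rho> d1 d2 t2) (tsubst d1 t2) (tsubst d2 t2))}"

definition Erel_ty :: "(tvar \<Rightarrow> (tm \<times> tm) set) \<Rightarrow> (tvar \<Rightarrow> ty) \<Rightarrow> (tvar \<Rightarrow> ty) \<Rightarrow> ty \<Rightarrow> (tm \<times> tm) set" where
  "Erel_ty \<rho> d1 d2 t = Erel (Vrel \<rho> d1 d2 t) (tsubst d1 t) (tsubst d2 t)"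

definition tyctx_subst :: "(tvar \<Rightarrow> ty) \<Rightarrow> (var \<Rightarrow> ty option) \<Rightarrow> (var \<Rightarrow> ty option)" where
  "tyctx_subst d G = (\<lambda>x. map_option (tsubst d) (G x))"

definition respects_ctx :: "(var \<Rightarrow> tm option) \<Rightarrow> (var \<Rightarrow> ty option) \<Rightarrow> bool" where
  "respects_ctx \<gamma> G \<longleftrightarrow> dom \<gamma> = dom G \<and> (\<forall>x\<in>dom G. ctyped (the (\<gamma> x)) (the (G x)))"

definition VG :: "(tvar \<Rightarrow> (tm \<times> tm) set) \<Rightarrow> (tvar \<Rightarrow> ty) \<Rightarrow> (tvar \<Rightarrow> ty) \<Rightarrow> (var \<Rightarrow> ty option)
    \<Rightarrow> ((var \<Rightarrow> tm option) \<times> (var \<Rightarrow> tm option)) set" where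
  "VG \<rho> d1 d2 G = {(\<gamma>1, \<gamma>2). respects_ctx \<gamma>1 (tyctx_subst d1 G) \<and> respects_ctx \<gamma>2 (tyctx_subst d2 G) \<and>
      (\<forall>x\<in>dom G. (the (\<gamma>1 x), the (\<gamma>2 x)) \<in> Vrel \<rho> d1 d2 (the (G x)))}"

text \<open>A policy: confidential inputs VP, partial map FP to declassification functions,
  the result type tauf f of each f, and the naming of the fresh type variables
  alpha_x (ax x), alpha_f (af f) and fresh term variables x_f (xf f).\<close>
record policy =
  VP :: "var set"
  FP :: "var \<Rightarrow> tm option"
  tauf :: "tm \<Rightarrow> ty"
  ax :: "var \<Rightarrow> tvar"
  af :: "tm \<Rightarrow> tvar"
  xf :: "tm \<Rightarrow> var"

definition Vtop :: "policy \<Rightarrow> var set" where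
  "Vtop P = VP P - dom (FP P)"

definition Funs :: "policy \<Rightarrow> tm set" where
  "Funs P = ran (FP P)"

definition wf_policy :: "policy \<Rightarrow> bool" where
  "wf_policy P \<longleftrightarrow> finite (VP P) \<and> dom (FP P) \<subseteq> VP P \<and>
     (\<forall>f\<in>Funs P. (\<exists>y e. f = Lam y TInt e) \<and> ctyped f (TArr TInt (tauf P f)) \<and> ftv (tauf P f) = {}) \<and>
     inj_on (ax P) (Vtop P) \<and> inj_on (af P) (Funs P) \<and> ax P ` Vtop P \<inter> af P ` Funs P = {} \<and>
     inj_on (xf P) (Funs P) \<and> xf P ` Funs P \<inter> VP P = {}"

definition DeltaP :: "policy \<Rightarrow> tvar set" where
  "DeltaP P = ax P ` Vtop P \<union> af P ` Funs P"

definition GammaP :: "policy \<Rightarrow> var \<Rightarrow> ty option" where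
  "GammaP P x =
     (if x \<in> Vtop P then Some (TVar (ax P x))
      else if x \<in> dom (FP P) then Some (TVar (af P (the (FP P x))))
      else if x \<in> xf P ` Funs P then
        (let f = (THE f. f \<in> Funs P \<and> xf P f = x) in Some (TArr (TVar (af P f)) (tauf P f)))
      else None)"

definition deltaP :: "policy \<Rightarrow> tvar \<Rightarrow> ty" where
  "deltaP P a = (if a \<in> DeltaP P then TInt else TVar a)"

text \<open>Irel R d t: the clauses of I[t] with R giving the relations at type variables and d = delta_P.\<close>
fun Irel :: "(tvar \<Rightarrow> (tm \<times> tm) set) \<Rightarrow> (tvar \<Rightarrow> ty) \<Rightarrow> ty \<Rightarrow> (tm \<times> tm) set" where
  "Irel R d TInt = {(Num n, Num n) | n. True}"
| "Irel R d (TVar a) = R a"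
| "Irel R d (TProd t1 t2) = {(Pair a1 b1, Pair a2 b2) | a1 b1 a2 b2.
      (a1, a2) \<in> Irel R d t1 \<and> (b1, b2) \<in> Irel R d t2}"
| "Irel R d (TArr t1 t2) = {(v1, v2). is_val v1 \<and> is_val v2 \<and>
      ctyped v1 (tsubst d (TArr t1 t2)) \<and> ctyped v2 (tsubst d (TArr t1 t2)) \<and>
      (\<forall>w1 w2. (w1, w2) \<in> Irel R d t1 \<longrightarrow>
         (App v1 w1, App v2 w2) \<in> Erel (Irel R d t2) (tsubst d t2) (tsubst d t2))}"

text \<open>I at the type variables of Delta_P. For alpha_f, I[tau_f] is taken with the empty
  variable relation, which is irrelevant since tau_f is closed.\<close>
definition IvarP :: "policy \<Rightarrow> tvar \<Rightarrow> (tm \<times> tm) set" where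
  "IvarP P a =
     (if a \<in> ax P ` Vtop P then
        {(v1, v2). is_val v1 \<and> is_val v2 \<and> ctyped v1 TInt \<and> ctyped v2 TInt}
      else if a \<in> af P ` Funs P then
        (let f = (THE f. f \<in> Funs P \<and> af P f = a) in
         {(v1, v2). is_val v1 \<and> is_val v2 \<and> ctyped v1 TInt \<and> ctyped v2 TInt \<and>
            (App f v1, App f v2) \<in> Erel (Irel (\<lambda>_. {}) (deltaP P) (tauf P f))
                                     (tsubst (deltaP P) (tauf P f)) (tsubst (deltaP P) (tauf P f))})
      else {})"

definition Irel_P :: "policy \<Rightarrow> ty \<Rightarrow> (tm \<times> tm) set" where
  "Irel_P P t = Irel (IvarP P) (deltaP P) t"

definition rhoP :: "policy \<Rightarrow> tvar \<Rightarrow> (tm \<times> tm) set" where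
  "rhoP P = IvarP P"

definition I_pol :: "policy \<Rightarrow> ((var \<Rightarrow> tm option) \<times> (var \<Rightarrow> tm option)) set" where
  "I_pol P = {(\<gamma>1, \<gamma>2).
      respects_ctx \<gamma>1 (tyctx_subst (deltaP P) (GammaP P)) \<and>
      respects_ctx \<gamma>2 (tyctx_subst (deltaP P) (GammaP P)) \<and>
      (\<forall>f\<in>Funs P. \<gamma>1 (xf P f) = Some f \<and> \<gamma>2 (xf P f) = Some f) \<and>
      (\<forall>x\<in>dom (GammaP P) - xf P ` Funs P.
          (the (\<gamma>1 x), the (\<gamma>2 x)) \<in> Irel_P P (the (GammaP P x)))}"

end

theory Submission
  imports Defs
begin

text \<open>Every variable of the public context other than the x_f has a type variable as its
  type, and at type variables the indistinguishability relation and the logical relation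
  under rho_P coincide by definition. The remaining variables x_f are mapped to f itself
  by both substitutions, and f is related to itself at alpha_f \<rightarrow> tau_f because
  I[alpha_f] relates exactly those inputs on which f yields indistinguishable outputs.\<close>

lemma tsubst_closed: "ftv t = {} \<Longrightarrow> tsubst d t = t"
  by (induction t) auto

lemma Irel_eq_Vrel: "(\<And>a. a \<in> ftv t \<Longrightarrow> R a = \<rho> a) \<Longrightarrow> Irel R d t = Vrel \<rho> d d t"
  by (induction t) auto

lemma wf_policy_declassifier:
  "wf_policy P \<Longrightarrow> f \<in> Funs P \<Longrightarrow>
    (\<exists>y e. f = Lam y TInt e) \<and> ctyped f (TArr TInt (tauf P f)) \<and> ftv (tauf P f) = {}"
  by (simp add: wf_policy_def)

lemma wf_policy_xf_notin_VP:
  "wf_policy P \<Longrightarrow> f \<in> Funs P \<Longrightarrow> xf P f \<notin> VP P"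
  unfolding wf_policy_def by blast

lemma wf_policy_the_xf:
  "wf_policy P \<Longrightarrow> f \<in> Funs P \<Longrightarrow> (THE g. g \<in> Funs P \<and> xf P g = xf P f) = f"
  unfolding wf_policy_def by (auto intro!: the_equality dest: inj_onD)

lemma wf_policy_the_af:
  "wf_policy P \<Longrightarrow> f \<in> Funs P \<Longrightarrow> (THE g. g \<in> Funs P \<and> af P g = af P f) = f"
  unfolding wf_policy_def by (auto intro!: the_equality dest: inj_onD)

lemma GammaP_xf:
  assumes "wf_policy P" and "f \<in> Funs P"
  shows "GammaP P (xf P f) = Some (TArr (TVar (af P f)) (tauf P f))"
proof -
  have "xf P f \<notin> Vtop P" and "xf P f \<notin> dom (FP P)"
    using wf_policy_xf_notin_VP[OF assms] assms(1)
    unfolding Vtop_def wf_policy_def by blast+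
  then show ?thesis
    using assms wf_policy_the_xf[OF assms] by (simp add: GammaP_def)
qed

lemma GammaP_eq_TVar:
  "x \<in> dom (GammaP P) \<Longrightarrow> x \<notin> xf P ` Funs P \<Longrightarrow> \<exists>a. GammaP P x = Some (TVar a)"
  unfolding GammaP_def by (auto split: if_splits)

lemma deltaP_af: "f \<in> Funs P \<Longrightarrow> deltaP P (af P f) = TInt"
  unfolding deltaP_def DeltaP_def by simp

lemma wf_policy_af_notin_ax:
  "wf_policy P \<Longrightarrow> f \<in> Funs P \<Longrightarrow> af P f \<notin> ax P ` Vtop P"
  unfolding wf_policy_def by (metis disjoint_iff imageI)

lemma IvarP_af:
  assumes "wf_policy P" and "f \<in> Funs P"
  shows "IvarP P (af P f) = {(v1, v2). is_val v1 \<and> is_val v2 \<and> ctyped v1 TInt \<and> ctyped v2 TInt \<and>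
      (App f v1, App f v2) \<in> Erel (Irel (\<lambda>_. {}) (deltaP P) (tauf P f))
                                 (tsubst (deltaP P) (tauf P f)) (tsubst (deltaP P) (tauf P f))}"
  using assms wf_policy_af_notin_ax[OF assms] wf_policy_the_af[OF assms]
  unfolding IvarP_def by (auto simp: Let_def)

lemma declassifier_self_related:
  assumes "wf_policy P" and "f \<in> Funs P"
  shows "(f, f) \<in> Vrel (rhoP P) (deltaP P) (deltaP P) (TArr (TVar (af P f)) (tauf P f))"
proof -
  obtain y e where "f = Lam y TInt e"
    and f_ty: "ctyped f (TArr TInt (tauf P f))" and closed: "ftv (tauf P f) = {}"
    using wf_policy_declassifier[OF assms] by blast
  then have val: "is_val f" by (simp add: is_val.intros)
  have ty: "tsubst (deltaP P) (TArr (TVar (af P f)) (tauf P f)) = TArr TInt (tauf P f)"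
    using deltaP_af[OF assms(2)] tsubst_closed[OF closed] by simp
  have "Irel (\<lambda>_. {}) (deltaP P) (tauf P f) = Vrel (rhoP P) (deltaP P) (deltaP P) (tauf P f)"
    using closed by (intro Irel_eq_Vrel) auto
  then have "(App f w1, App f w2) \<in> Erel (Vrel (rhoP P) (deltaP P) (deltaP P) (tauf P f))
      (tsubst (deltaP P) (tauf P f)) (tsubst (deltaP P) (tauf P f))"
    if "(w1, w2) \<in> rhoP P (af P f)" for w1 w2
    using that IvarP_af[OF assms] unfolding rhoP_def by auto
  with val f_ty ty show ?thesis
    by (simp only: Vrel.simps) blast
qed

theorem lemma4:
  assumes "wf_policy P"
    and "(\<gamma>1, \<gamma>2) \<in> I_pol P"
  shows "(\<gamma>1, \<gamma>2) \<in> VG (rhoP P) (deltaP P) (deltaP P) (GammaP P)"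
proof -
  note I = assms(2)[unfolded I_pol_def, simplified]
  have "(the (\<gamma>1 x), the (\<gamma>2 x)) \<in> Vrel (rhoP P) (deltaP P) (deltaP P) (the (GammaP P x))"
    if x: "x \<in> dom (GammaP P)" for x
  proof (cases "x \<in> xf P ` Funs P")
    case True
    then obtain f where "f \<in> Funs P" and "x = xf P f" by blast
    then show ?thesis
      using I declassifier_self_related[OF assms(1)] GammaP_xf[OF assms(1)] by auto
  next
    case False
    then have "(the (\<gamma>1 x), the (\<gamma>2 x)) \<in> Irel_P P (the (GammaP P x))"
      using I x by blast
    moreover obtain a where "GammaP P x = Some (TVar a)"
      using x False GammaP_eq_TVar by blast
    ultimately show ?thesis
      by (simp add: Irel_P_def rhoP_def)
  qed
  then show ?thesis
    unfolding VG_def using I by auto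
qed

end
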